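(* Assume $d_Y\ge2$. Let $\mathcal T$ be the set of $\mathcal Y$-valued transition matrices on $\mathcal X$, viewed as a convex subset of $\mathbb R^{\mathcal Y\times\mathcal X\times\mathcal X}$ with nonempty interior in its affine hull, equipped with the Lebesgue measure of that affine hull, and let $\Delta_{\mathcal X}$ be the probability simplex on $\mathcal X$ with its Lebesgue measure. Then for almost every $(\vec W,P)\in\mathcal T\times\Delta_{\mathcal X}$ one has $K_{\vec W}=\{0\}$ and $\mathcal V^{k_{(P,\vec W)}}(P)=\mathcal V_{\mathcal X}$. Moreover, for almost every $\vec W\in\mathcal T$ (such $\vec W$ being irreducible almost everywhere) one has $K_{\vec W}=\{0\}$ and $\mathcal V^{k_{(P_{\vec W},\vec W)}}(P_{\vec W})=\mathcal V_{\mathcal X}$.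
   Context: Let $\mathcal X=\{1,\dots,d\}$, $\mathcal Y=\{1,\dots,d_Y\}$ be finite sets, $\mathcal V_{\mathcal X}=\mathbb R^{\mathcal X}$ (column vectors; distributions are regarded as vectors in it), $u_{\mathcal X}$ the all-ones vector. A $\mathcal Y$-valued transition matrix on $\mathcal X$ is a family $\vec W=(W_y)_{y\in\mathcal Y}$ of $d\times d$ nonnegative matrices $W_y(x|x')$ ($x$ row, $x'$ column) with $|\vec W|:=\sum_yW_y$ column-stochastic; it is irreducible if $|\vec W|$ is, and then $P_{\vec W}$ is the unique probability vector with $|\vec W|P_{\vec W}=P_{\vec W}$. For $k\ge1$, $P^k[\vec W]:\mathcal V_{\mathcal X}\to\mathbb R^{\mathcal Y^k}$, $(P^k[\vec W]v)(y_k,\dots,y_1)=u_{\mathcal X}^TW_{y_k}\cdots W_{y_1}v$. $k_{\vec W}$ is the least $k_0\ge1$ with $\bigcap_{k\ge1}\operatorname{Ker}P^k[\vec W]=\operatorname{Ker}P^{k_0}[\vec W]$; $K_{\vec W}:=\operatorname{Ker}P^{k_{\vec W}}[\vec W]$; $[v]$ is the class of $v$ in $\mathcal V_{\mathcal X}/K_{\vec W}$. For a distribution $P$ and $k\ge0$, $\mathcal V^k(P)$ is the subspace of $\mathcal V_{\mathcal X}/K_{\vec W}$ spanned by $[W_{y_{k'}}\cdots W_{y_1}P]$, $0\le k'\le k$, $y_i\in\mathcal Y$. $k_{(P,\vec W)}$ is the least $k_1\ge1$ with $\bigcup_{k\ge1}\mathcal V^k(P)=\mathcal V^{k_1}(P)$.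 (When $K_{\vec W}=\{0\}$ the quotient is identified with $\mathcal V_{\mathcal X}$.) *)

theory Defs
  imports "HOL-Analysis.Analysis"
begin

text \<open>Y-valued transition matrices on X. The index sets are finite types 'x, 'y;
  W y $ x $ x' is the entry W_y(x|x') (row x, column x').\<close>

definition abs_tm :: "('y::finite \<Rightarrow> real^'x::finite^'x) \<Rightarrow> real^'x^'x" where
  "abs_tm W = (\<Sum>y\<in>UNIV. W y)"

definition transition_matrix :: "('y::finite \<Rightarrow> real^'x::finite^'x) \<Rightarrow> bool" where
  "transition_matrix W \<longleftrightarrow>
     (\<forall>y x x'. 0 \<le> W y $ x $ x') \<and> (\<forall>x'. (\<Sum>x\<in>UNIV. abs_tm W $ x $ x') = 1)"

definition mpow :: "real^'x::finite^'x \<Rightarrow> nat \<Rightarrow> real^'x^'x" where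
  "mpow A k = ((\<lambda>B. A ** B) ^^ k) (mat 1)"

definition irreducible_mat :: "real^'x::finite^'x \<Rightarrow> bool" where
  "irreducible_mat A \<longleftrightarrow> (\<forall>i j. \<exists>k. 0 < mpow A k $ i $ j)"

definition irreducible_tm :: "('y::finite \<Rightarrow> real^'x::finite^'x) \<Rightarrow> bool" where
  "irreducible_tm W \<longleftrightarrow> irreducible_mat (abs_tm W)"

definition prob_vec :: "real^'x::finite \<Rightarrow> bool" where
  "prob_vec P \<longleftrightarrow> (\<forall>x. 0 \<le> P $ x) \<and> (\<Sum>x\<in>UNIV. P $ x) = 1"

text \<open>Stationary distribution P_W (meaningful for irreducible W).\<close>
definition stationary :: "('y::finite \<Rightarrow> real^'x::finite^'x) \<Rightarrow> real^'x" where
  "stationary W = (THE P. prob_vec P \<and> abs_tm W *v P = P)"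

fun wprod :: "('y \<Rightarrow> real^'x::finite^'x) \<Rightarrow> 'y list \<Rightarrow> real^'x^'x" where
  "wprod W [] = mat 1"
| "wprod W (y # ys) = W y ** wprod W ys"

definition Pk :: "('y \<Rightarrow> real^'x::finite^'x) \<Rightarrow> nat \<Rightarrow> real^'x \<Rightarrow> ('y list \<Rightarrow> real)" where
  "Pk W k v = (\<lambda>ys. if length ys = k then (\<Sum>x\<in>UNIV. (wprod W ys *v v) $ x) else 0)"

definition kerP :: "('y \<Rightarrow> real^'x::finite^'x) \<Rightarrow> nat \<Rightarrow> (real^'x) set" where
  "kerP W k = {v. Pk W k v = (\<lambda>_. 0)}"

definition kW :: "('y \<Rightarrow> real^'x::finite^'x) \<Rightarrow> nat" where
  "kW W = (LEAST k0. 1 \<le> k0 \<and> (\<Inter>k\<in>{1..}. kerP W k) = kerP W k0)"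

definition KW :: "('y \<Rightarrow> real^'x::finite^'x) \<Rightarrow> (real^'x) set" where
  "KW W = kerP W (kW W)"

text \<open>V^k(P), a subspace of the quotient V_X / K_W, is represented by its preimage
  in V_X (a subspace containing K_W).\<close>
definition Vk :: "('y \<Rightarrow> real^'x::finite^'x) \<Rightarrow> real^'x \<Rightarrow> nat \<Rightarrow> (real^'x) set" where
  "Vk W P k = span ((\<lambda>ys. wprod W ys *v P) ` {ys. length ys \<le> k} \<union> KW W)"

definition kPW :: "real^'x::finite \<Rightarrow> ('y \<Rightarrow> real^'x^'x) \<Rightarrow> nat" where
  "kPW P W = (LEAST k1. 1 \<le> k1 \<and> (\<Union>k\<in>{1..}. Vk W P k) = Vk W P k1)"

text \<open>The affine hull of the set of transition matrices is parametrised by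
  all entries except W_{y0}(x0|x'), which is determined by column-stochasticity;
  the simplex is parametrised by all coordinates except P(x0).\<close>
definition tm_coords :: "'y \<Rightarrow> 'x \<Rightarrow> ('y \<times> 'x \<times> 'x) set" where
  "tm_coords y0 x0 = {(y, x, x'). (y, x) \<noteq> (y0, x0)}"

definition tm_of :: "'y::finite \<Rightarrow> 'x::finite \<Rightarrow> ('y \<times> 'x \<times> 'x \<Rightarrow> real) \<Rightarrow> ('y \<Rightarrow> real^'x^'x)" where
  "tm_of y0 x0 \<theta> = (\<lambda>y. \<chi> x x'. if (y, x) = (y0, x0)
      then 1 - (\<Sum>p\<in>UNIV - {(y0, x0)}. \<theta> (fst p, snd p, x'))
      else \<theta> (y, x, x'))"

definition dist_of :: "'x::finite \<Rightarrow> ('x \<Rightarrow> real) \<Rightarrow> real^'x" where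
  "dist_of x0 q = (\<chi> x. if x = x0 then 1 - (\<Sum>z\<in>UNIV - {x0}. q z) else q x)"

end

theory Submission
  imports Defs "HOL-Computational_Algebra.Polynomial"
begin

text \<open>All the properties are certified by non-vanishing polynomials in the coordinates of the
  affine charts. K_W = {0} follows once the functionals u^T W_w for n words w are linearly
  independent, and V^k(P) is the whole space once the vectors W_w P for n words w are; both are
  determinant conditions, and by Cramer's rule the stationary distribution is a polynomial vector
  divided by a determinant. A polynomial that is non-zero at one point vanishes only on a null set
  (induction on the number of variables, using Fubini). One witness, whose letter y1 acts as a
  diagonal matrix with distinct entries while |W| is uniform, turns every certificate into a
  Vandermonde determinant.\<close>

section \<open>Polynomial functions and their zero sets\<close>

inductive_set polyfun :: "('a \<Rightarrow> real) set \<Rightarrow> ('a \<Rightarrow> real) set" for V where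
  polyfun_const: "(\<lambda>_. c) \<in> polyfun V"
| polyfun_var: "v \<in> V \<Longrightarrow> v \<in> polyfun V"
| polyfun_add: "f \<in> polyfun V \<Longrightarrow> g \<in> polyfun V \<Longrightarrow> (\<lambda>x. f x + g x) \<in> polyfun V"
| polyfun_mult: "f \<in> polyfun V \<Longrightarrow> g \<in> polyfun V \<Longrightarrow> (\<lambda>x. f x * g x) \<in> polyfun V"

abbreviation coordinates :: "'i set \<Rightarrow> (('i \<Rightarrow> real) \<Rightarrow> real) set" where
  "coordinates I \<equiv> (\<lambda>j \<theta>. \<theta> j) ` I"

lemma polyfun_sum:
  "finite A \<Longrightarrow> (\<And>a. a \<in> A \<Longrightarrow> f a \<in> polyfun V) \<Longrightarrow> (\<lambda>x. \<Sum>a\<in>A. f a x) \<in> polyfun V"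
  by (induction A rule: finite_induct) (auto intro: polyfun.intros)

lemma polyfun_prod:
  "finite A \<Longrightarrow> (\<And>a. a \<in> A \<Longrightarrow> f a \<in> polyfun V) \<Longrightarrow> (\<lambda>x. \<Prod>a\<in>A. f a x) \<in> polyfun V"
  by (induction A rule: finite_induct) (auto intro: polyfun.intros)

lemma polyfun_diff: "f \<in> polyfun V \<Longrightarrow> g \<in> polyfun V \<Longrightarrow> (\<lambda>x. f x - g x) \<in> polyfun V"
proof -
  assume "f \<in> polyfun V" "g \<in> polyfun V"
  then have "(\<lambda>x. f x + (-1) * g x) \<in> polyfun V" by (intro polyfun_add polyfun_mult polyfun_const)
  then show ?thesis by simp
qed

lemma polyfun_compose:
  assumes "f \<in> polyfun V" and "\<And>v. v \<in> V \<Longrightarrow> (\<lambda>x. v (g x)) \<in> polyfun V'"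
  shows "(\<lambda>x. f (g x)) \<in> polyfun V'"
  using assms(1) by induction (auto intro: polyfun.intros assms(2))

lemma polyfun_measurable:
  assumes "f \<in> polyfun V" and "\<And>v. v \<in> V \<Longrightarrow> v \<in> borel_measurable M"
  shows "f \<in> borel_measurable M"
  using assms(1) by induction (auto intro: assms(2))

lemma polyfun_coordinates_update:
  assumes "f \<in> polyfun (coordinates I)" and "i \<notin> I"
  shows "f (\<theta>(i := t)) = f \<theta>"
  using assms(1) by induction (use assms(2) in auto)

lemma polyfun_coordinates_empty: "f \<in> polyfun (coordinates {}) \<Longrightarrow> f \<theta> = f \<theta>'"
  by (induction rule: polyfun.induct) auto

lemma polyfun_coordinates_insert:
  assumes "f \<in> polyfun (coordinates (insert i I))"
  obtains Q where "\<And>k. (\<lambda>\<theta>. coeff (Q \<theta>) k) \<in> polyfun (coordinates I)"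
    and "\<And>\<theta>. f \<theta> = poly (Q \<theta>) (\<theta> i)"
proof -
  have "\<exists>Q. (\<forall>k. (\<lambda>\<theta>. coeff (Q \<theta>) k) \<in> polyfun (coordinates I))
      \<and> (\<forall>\<theta>. f \<theta> = poly (Q \<theta>) (\<theta> i))"
    using assms
  proof induction
    case (polyfun_const c)
    show ?case
      by (rule exI[of _ "\<lambda>_. [:c:]"]) (auto simp: coeff_pCons split: nat.splits intro: polyfun.intros)
  next
    case (polyfun_var v)
    then obtain j where j: "j \<in> insert i I" "v = (\<lambda>\<theta>. \<theta> j)" by auto
    show ?case
    proof (cases "j = i")
      case True
      show ?thesis
        by (rule exI[of _ "\<lambda>_. [:0, 1:]"]) (auto simp: j True coeff_pCons split: nat.splits intro: polyfun.intros)
    next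
      case False
      with j have "(\<lambda>\<theta>. coeff [:\<theta> j:] k) \<in> polyfun (coordinates I)" for k
        by (cases k) (auto intro: polyfun.intros)
      then show ?thesis by (intro exI[of _ "\<lambda>\<theta>. [:\<theta> j:]"]) (auto simp: j)
    qed
  next
    case (polyfun_add f g)
    then obtain Q1 Q2 where
        "\<forall>k. (\<lambda>\<theta>. coeff (Q1 \<theta>) k) \<in> polyfun (coordinates I)" "\<forall>\<theta>. f \<theta> = poly (Q1 \<theta>) (\<theta> i)"
        "\<forall>k. (\<lambda>\<theta>. coeff (Q2 \<theta>) k) \<in> polyfun (coordinates I)" "\<forall>\<theta>. g \<theta> = poly (Q2 \<theta>) (\<theta> i)"
      by blast
    then show ?case
      by (intro exI[of _ "\<lambda>\<theta>. Q1 \<theta> + Q2 \<theta>"]) (auto intro: polyfun.intros)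
  next
    case (polyfun_mult f g)
    then obtain Q1 Q2 where Q1: "\<And>k. (\<lambda>\<theta>. coeff (Q1 \<theta>) k) \<in> polyfun (coordinates I)"
      and Q2: "\<And>k. (\<lambda>\<theta>. coeff (Q2 \<theta>) k) \<in> polyfun (coordinates I)"
      and "\<forall>\<theta>. f \<theta> = poly (Q1 \<theta>) (\<theta> i)" "\<forall>\<theta>. g \<theta> = poly (Q2 \<theta>) (\<theta> i)"
      by blast
    then show ?case
      by (intro exI[of _ "\<lambda>\<theta>. Q1 \<theta> * Q2 \<theta>"])
        (auto simp: coeff_mult intro!: polyfun_sum polyfun.polyfun_mult[OF Q1 Q2])
  qed
  then show thesis using that by blast
qed

lemma AE_poly_nonzero:
  fixes p :: "real poly"
  assumes "p \<noteq> 0" shows "AE y in lborel. poly p y \<noteq> 0"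
  by (rule AE_I'[OF finite_imp_null_set_lborel[OF poly_roots_finite[OF assms]]]) auto

lemma polyfun_zero_set_null:
  fixes I :: "'i set"
  assumes "finite I" and "f \<in> polyfun (coordinates I)" and "f a \<noteq> 0"
  shows "{\<theta> \<in> space (PiM I (\<lambda>_. lborel)). f \<theta> = 0} \<in> null_sets (PiM I (\<lambda>_. lborel::real measure))"
  using assms
proof (induction I arbitrary: f a rule: finite_induct)
  case empty
  then have "f \<theta> \<noteq> 0" for \<theta>
    using polyfun_coordinates_empty[of f \<theta> a] by simp
  then have "{\<theta> \<in> space (PiM {} (\<lambda>_. lborel)). f \<theta> = 0} = {}"
    by blast
  then show ?case by (simp only: null_sets.empty_sets)
next
  case (insert i I)
  interpret product_sigma_finite "\<lambda>_::'i. lborel :: real measure"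
    by unfold_locales
  let ?M = "\<lambda>I. PiM I (\<lambda>_. lborel::real measure)"
  obtain Q where Q: "\<And>k. (\<lambda>\<theta>. coeff (Q \<theta>) k) \<in> polyfun (coordinates I)" "\<And>\<theta>. f \<theta> = poly (Q \<theta>) (\<theta> i)"
    using polyfun_coordinates_insert[OF insert.prems(1)] by blast
  have Q_update: "Q (\<theta>(i := t)) = Q \<theta>" for \<theta> t
    using polyfun_coordinates_update[OF Q(1) insert.hyps(2)] by (simp add: poly_eq_iff)
  obtain k where k: "coeff (Q a) k \<noteq> 0"
    using insert.prems(2) Q(2)[of a] by (metis leading_coeff_0_iff poly_0)
  let ?Z = "{\<theta> \<in> space (?M (insert i I)). f \<theta> = 0}"
  have "f \<in> borel_measurable (?M (insert i I))"
    by (rule polyfun_measurable[OF insert.prems(1)]) auto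
  then have Z: "?Z \<in> sets (?M (insert i I))"
    by measurable
  \<comment> \<open>Fubini: off the null set where the coefficient k vanishes, each fibre is the root set
    of a non-zero polynomial.\<close>
  have "AE \<theta> in ?M I. Q \<theta> \<noteq> 0"
    using AE_not_in[OF insert.IH[OF Q(1) k]] AE_space by eventually_elim auto
  then have "AE \<theta> in ?M I. (\<integral>\<^sup>+ t. indicator ?Z (\<theta>(i := t)) \<partial>lborel) = 0"
  proof eventually_elim
    case (elim \<theta>)
    have "AE t in lborel. indicator ?Z (\<theta>(i := t)) = (0::ennreal)"
      using AE_poly_nonzero[OF elim] by eventually_elim (simp add: Q(2) Q_update)
    then show ?case by (subst nn_integral_cong_AE[where v="\<lambda>_. 0"]) auto
  qed
  then have "emeasure (?M (insert i I)) ?Z = 0"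
    using Z insert.hyps
    by (simp add: product_nn_integral_insert nn_integral_cong_AE flip: nn_integral_indicator)
  with Z show ?case by auto
qed

lemma AE_polyfun_nonzero:
  assumes "finite I" and "f \<in> polyfun (coordinates I)" and "f a \<noteq> 0"
  shows "AE \<theta> in PiM I (\<lambda>_. lborel::real measure). f \<theta> \<noteq> 0"
  by (rule AE_I'[OF polyfun_zero_set_null[OF assms]]) auto

lemma AE_pair_polyfun_nonzero:
  fixes I :: "'i set" and J :: "'j set"
  assumes "finite I" and "finite J"
    and f: "f \<in> polyfun ((\<lambda>j z. fst z j) ` I \<union> (\<lambda>j z. snd z j) ` J)" and "f a \<noteq> 0"
  shows "AE z in PiM I (\<lambda>_. lborel::real measure) \<Otimes>\<^sub>M PiM J (\<lambda>_. lborel::real measure). f z \<noteq> 0"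
proof -
  interpret product_sigma_finite "\<lambda>_. lborel::real measure"
    by unfold_locales
  interpret pair_sigma_finite "PiM I (\<lambda>_. lborel::real measure)" "PiM J (\<lambda>_. lborel::real measure)"
    unfolding pair_sigma_finite_def using assms(1,2) by (blast intro: sigma_finite)
  have "(\<lambda>x. f (x, y)) \<in> polyfun (coordinates I)" "(\<lambda>y. f (x, y)) \<in> polyfun (coordinates J)" for x y
    by (rule polyfun_compose[OF f], auto intro: polyfun.intros)+
  then have "AE x in PiM I (\<lambda>_. lborel). f (x, snd a) \<noteq> 0"
    and "\<And>x. f (x, snd a) \<noteq> 0 \<Longrightarrow> AE y in PiM J (\<lambda>_. lborel). f (x, y) \<noteq> 0"
    using assms(1,2,4) by (auto intro: AE_polyfun_nonzero[where a="fst a"] AE_polyfun_nonzero)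
  then have "AE x in PiM I (\<lambda>_. lborel). AE y in PiM J (\<lambda>_. lborel). f (x, y) \<noteq> 0"
    by (auto elim!: AE_mp)
  moreover have "f \<in> borel_measurable (PiM I (\<lambda>_. lborel) \<Otimes>\<^sub>M PiM J (\<lambda>_. lborel))"
    by (rule polyfun_measurable[OF f]) auto
  ultimately show ?thesis
    by (intro AE_pair_measure) (use \<open>f \<in> borel_measurable _\<close> in measurable)
qed

definition poly_mat :: "('s \<Rightarrow> real) set \<Rightarrow> ('s \<Rightarrow> real^'n^'m) \<Rightarrow> bool" where
  "poly_mat V A \<longleftrightarrow> (\<forall>i j. (\<lambda>s. A s $ i $ j) \<in> polyfun V)"

definition poly_vec :: "('s \<Rightarrow> real) set \<Rightarrow> ('s \<Rightarrow> real^'n) \<Rightarrow> bool" where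
  "poly_vec V v \<longleftrightarrow> (\<forall>i. (\<lambda>s. v s $ i) \<in> polyfun V)"

lemma polyfun_If:
  "(c \<Longrightarrow> f \<in> polyfun V) \<Longrightarrow> (\<not> c \<Longrightarrow> g \<in> polyfun V) \<Longrightarrow> (\<lambda>s. if c then f s else g s) \<in> polyfun V"
  by (cases c) auto

lemma poly_mat_const: "poly_mat V (\<lambda>_. A)"
  unfolding poly_mat_def by (auto intro: polyfun_const)

lemma poly_mat_mult:
  "poly_mat V A \<Longrightarrow> poly_mat V B \<Longrightarrow> poly_mat V (\<lambda>s. A s ** B s :: real^'n::finite^'m)"
  unfolding poly_mat_def matrix_matrix_mult_def by (auto intro!: polyfun_sum polyfun_mult)

lemma poly_vec_mult:
  fixes A :: "'s \<Rightarrow> real^'n::finite^'m"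
  shows "poly_mat V A \<Longrightarrow> poly_vec V v \<Longrightarrow> poly_vec V (\<lambda>s. A s *v v s)"
  unfolding poly_mat_def poly_vec_def matrix_vector_mult_def by (auto intro!: polyfun_sum polyfun_mult)

lemma poly_mat_wprod:
  "(\<And>y. poly_mat V (\<lambda>s. W s y)) \<Longrightarrow> poly_mat V (\<lambda>s. wprod (W s) ys :: real^'x::finite^'x)"
  by (induction ys) (auto intro: poly_mat_mult poly_mat_const)

lemma poly_mat_abs_tm:
  fixes W :: "'s \<Rightarrow> 'y::finite \<Rightarrow> real^'x::finite^'x"
  shows "(\<And>y. poly_mat V (\<lambda>s. W s y)) \<Longrightarrow> poly_mat V (\<lambda>s. abs_tm (W s))"
  unfolding poly_mat_def abs_tm_def by (auto intro!: polyfun_sum)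

lemma polyfun_det: "poly_mat V A \<Longrightarrow> (\<lambda>s. det (A s :: real^'n::finite^'n)) \<in> polyfun V"
  unfolding det_def poly_mat_def
  by (auto intro!: polyfun_sum polyfun_prod polyfun_mult polyfun_const simp: finite_permutations)

lemma poly_mat_tm_of:
  assumes "\<And>j. j \<in> tm_coords y0 x0 \<Longrightarrow> (\<lambda>s. \<theta> s j) \<in> polyfun V"
  shows "poly_mat V (\<lambda>s. tm_of y0 x0 (\<theta> s) y)"
  unfolding poly_mat_def tm_of_def
  by (auto intro!: polyfun_If polyfun_diff polyfun_sum polyfun_const assms simp: tm_coords_def)

lemma poly_vec_dist_of:
  assumes "\<And>x. x \<noteq> x0 \<Longrightarrow> (\<lambda>s. q s x) \<in> polyfun V"
  shows "poly_vec V (\<lambda>s. dist_of x0 (q s))"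
  unfolding poly_vec_def dist_of_def
  by (auto intro!: polyfun_If polyfun_diff polyfun_sum polyfun_const assms)

section \<open>Column-stochastic families and the affine chart\<close>

definition entry_sum :: "real^'n::finite \<Rightarrow> real" where
  "entry_sum v = (\<Sum>x\<in>UNIV. v $ x)"

definition column_stochastic :: "real^'n::finite^'n \<Rightarrow> bool" where
  "column_stochastic A \<longleftrightarrow> (\<forall>j. (\<Sum>i\<in>UNIV. A $ i $ j) = 1)"

lemma entry_sum_mult_vec: "entry_sum (A *v v) = (\<Sum>j\<in>UNIV. (\<Sum>i\<in>UNIV. A $ i $ j) * v $ j)"
  unfolding entry_sum_def matrix_vector_mult_def
  by (simp add: sum_distrib_right) (rule sum.swap)

lemma entry_sum_sum_wprod_Cons:
  assumes "column_stochastic (abs_tm W)"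
  shows "(\<Sum>y\<in>UNIV. entry_sum (wprod W (y # ys) *v v)) = entry_sum (wprod W ys *v v)"
proof -
  let ?w = "wprod W ys *v v"
  have "(\<Sum>y\<in>UNIV. entry_sum (wprod W (y # ys) *v v))
      = (\<Sum>y\<in>UNIV. \<Sum>j\<in>UNIV. (\<Sum>i\<in>UNIV. W y $ i $ j) * ?w $ j)"
    by (simp add: entry_sum_mult_vec flip: matrix_vector_mul_assoc)
  also have "\<dots> = (\<Sum>j\<in>UNIV. (\<Sum>i\<in>UNIV. abs_tm W $ i $ j) * ?w $ j)"
    unfolding abs_tm_def sum_component sum_distrib_right
    by (subst (2) sum.swap, subst sum.swap) simp
  also have "\<dots> = entry_sum ?w"
    using assms by (simp add: column_stochastic_def entry_sum_def)
  finally show ?thesis .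
qed

lemma column_sum_abs_tm_remove:
  fixes W :: "'y::finite \<Rightarrow> real^'x::finite^'x"
  shows "(\<Sum>x\<in>UNIV. abs_tm W $ x $ x') = W y0 $ x0 $ x' + (\<Sum>p\<in>UNIV - {(y0, x0)}. W (fst p) $ snd p $ x')"
proof -
  have "(\<Sum>x\<in>UNIV. abs_tm W $ x $ x') = (\<Sum>p\<in>UNIV. W (fst p) $ snd p $ x')"
    unfolding abs_tm_def sum_component
    by (subst sum.swap) (simp add: sum.cartesian_product case_prod_beta flip: UNIV_Times_UNIV)
  also have "\<dots> = W y0 $ x0 $ x' + (\<Sum>p\<in>UNIV - {(y0, x0)}. W (fst p) $ snd p $ x')"
    by (simp add: sum.remove[of UNIV "(y0, x0)"])
  finally show ?thesis by simp
qed

lemma column_stochastic_tm_of: "column_stochastic (abs_tm (tm_of y0 x0 \<theta>))"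
proof -
  have "(\<Sum>p\<in>UNIV - {(y0, x0)}. tm_of y0 x0 \<theta> (fst p) $ snd p $ j)
      = (\<Sum>p\<in>UNIV - {(y0, x0)}. \<theta> (fst p, snd p, j))" for j
    by (rule sum.cong) (auto simp: tm_of_def)
  then show ?thesis
    unfolding column_stochastic_def column_sum_abs_tm_remove[of _ _ y0 x0] by (simp add: tm_of_def)
qed

definition tm_point :: "('y \<Rightarrow> real^'x::finite^'x) \<Rightarrow> 'y \<times> 'x \<times> 'x \<Rightarrow> real" where
  "tm_point W = (\<lambda>(y, x, x'). W y $ x $ x')"

lemma tm_of_tm_point:
  assumes "column_stochastic (abs_tm W)"
  shows "tm_of y0 x0 (tm_point W) = W"
proof -
  have "W y0 $ x0 $ x' = 1 - (\<Sum>p\<in>UNIV - {(y0, x0)}. W (fst p) $ snd p $ x')" for x'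
    using assms[unfolded column_stochastic_def, rule_format, of x'] column_sum_abs_tm_remove[of W x' y0 x0]
    by linarith
  then show ?thesis
    by (auto simp: tm_of_def tm_point_def fun_eq_iff vec_eq_iff)
qed

section \<open>Observability and reachability determinants\<close>

lemma det_nonzero_iff_kernel_trivial:
  fixes A :: "real^'n::finite^'n"
  shows "det A \<noteq> 0 \<longleftrightarrow> (\<forall>x. A *v x = 0 \<longrightarrow> x = 0)"
  by (simp add: invertible_det_nz[symmetric] invertible_left_inverse matrix_left_invertible_ker)

lemma det_nonzero_span_rows:
  fixes b :: "'n::finite \<Rightarrow> real^'n"
  assumes "det (\<chi> i. b i) \<noteq> 0"
  shows "span (range b) = UNIV"
proof -
  have "rows (\<chi> i. b i) = range b"
    by (auto simp: rows_def row_def)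
  then show ?thesis
    using assms by (simp add: invertible_det_nz[symmetric] invertible_left_inverse matrix_left_invertible_span_rows)
qed

definition observability_det :: "('y \<Rightarrow> real^'x::finite^'x) \<Rightarrow> ('x \<Rightarrow> 'y list) \<Rightarrow> real" where
  "observability_det W ws = det (\<chi> i x. \<Sum>z\<in>UNIV. wprod W (ws i) $ z $ x)"

definition reachability_det :: "('y \<Rightarrow> real^'x::finite^'x) \<Rightarrow> ('x \<Rightarrow> 'y list) \<Rightarrow> real^'x \<Rightarrow> real" where
  "reachability_det W vs P = det (\<chi> i. wprod W (vs i) *v P)"

lemma zero_in_kerP: "0 \<in> kerP W k"
  unfolding kerP_def Pk_def by (simp add: fun_eq_iff)

lemma entry_sum_wprod_eq_0_if_kerP:
  assumes "column_stochastic (abs_tm W)" and "v \<in> kerP W k" and "length ys \<le> k"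
  shows "entry_sum (wprod W ys *v v) = 0"
  using assms(3)
proof (induction "k - length ys" arbitrary: ys)
  case 0
  then have "Pk W k v ys = 0"
    using assms(2) by (simp add: kerP_def)
  with 0 show ?case by (simp add: Pk_def entry_sum_def)
next
  case (Suc j)
  then have "entry_sum (wprod W (y # ys) *v v) = 0" for y
    by (intro Suc.hyps) auto
  then show ?case
    using entry_sum_sum_wprod_Cons[OF assms(1), of ys v] by simp
qed

lemma KW_eqI:
  assumes "1 \<le> L" and "(\<Inter>k\<in>{1..}. kerP W k) = kerP W L"
  shows "KW W = kerP W L"
proof -
  have "1 \<le> kW W \<and> (\<Inter>k\<in>{1..}. kerP W k) = kerP W (kW W)"
    unfolding kW_def by (rule LeastI[of _ L]) (use assms in auto)
  then show ?thesis using assms(2) by (simp add: KW_def)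
qed

lemma Vk_kPW_eqI:
  assumes "1 \<le> L" and "(\<Union>k\<in>{1..}. Vk W P k) = Vk W P L"
  shows "Vk W P (kPW P W) = Vk W P L"
proof -
  have "1 \<le> kPW P W \<and> (\<Union>k\<in>{1..}. Vk W P k) = Vk W P (kPW P W)"
    unfolding kPW_def by (rule LeastI[of _ L]) (use assms in auto)
  then show ?thesis using assms(2) by simp
qed

lemma KW_eq_0_if_observability_det_nonzero:
  assumes "column_stochastic (abs_tm W)" and "observability_det W ws \<noteq> 0"
    and "\<And>i. length (ws i) \<le> L" and "1 \<le> L"
  shows "KW W = {0}"
proof -
  have "v = 0" if v: "v \<in> kerP W L" for v
  proof -
    have "(\<Sum>j\<in>UNIV. (\<Sum>z\<in>UNIV. wprod W (ws i) $ z $ j) * v $ j) = 0" for i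
      using entry_sum_wprod_eq_0_if_kerP[OF assms(1) v assms(3)] unfolding entry_sum_mult_vec .
    then have "(\<chi> i x. \<Sum>z\<in>UNIV. wprod W (ws i) $ z $ x) *v v = 0"
      by (simp add: vec_eq_iff entry_sum_mult_vec matrix_vector_mult_def)
    then show "v = 0"
      using assms(2) by (simp add: observability_det_def det_nonzero_iff_kernel_trivial)
  qed
  then have "kerP W L = {0}"
    using zero_in_kerP by blast
  moreover from this have "KW W = kerP W L"
    by (intro KW_eqI[OF assms(4)]) (use assms(4) zero_in_kerP in auto)
  ultimately show ?thesis by simp
qed

lemma Vk_kPW_eq_UNIV_if_reachability_det_nonzero:
  assumes "reachability_det W vs P \<noteq> 0" and "\<And>i. length (vs i) \<le> L" and "1 \<le> L"
  shows "Vk W P (kPW P W) = UNIV"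
proof -
  have "UNIV = span (range (\<lambda>i. wprod W (vs i) *v P))"
    using det_nonzero_span_rows assms(1) by (metis reachability_det_def)
  also have "\<dots> \<subseteq> Vk W P L"
    unfolding Vk_def by (rule span_mono) (use assms(2) in auto)
  finally have "Vk W P L = UNIV" by blast
  moreover from this have "Vk W P (kPW P W) = Vk W P L"
    by (intro Vk_kPW_eqI[OF assms(3)]) (use assms(3) in auto)
  ultimately show ?thesis by simp
qed

section \<open>Stationary distributions\<close>

lemma abs_tm_nonneg: "transition_matrix W \<Longrightarrow> 0 \<le> abs_tm W $ i $ j"
  unfolding transition_matrix_def abs_tm_def by (auto simp: sum_component intro: sum_nonneg)

lemma irreducible_tm_if_abs_tm_nonzero:
  assumes "transition_matrix W" and "\<And>i j. abs_tm W $ i $ j \<noteq> 0"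
  shows "irreducible_tm W"
  unfolding irreducible_tm_def irreducible_mat_def
proof (intro allI exI)
  fix i j
  show "0 < mpow (abs_tm W) 1 $ i $ j"
    using abs_tm_nonneg[OF assms(1), of i j] assms(2)[of i j] by (simp add: mpow_def)
qed

lemma compact_prob_vec: "compact {P::real^'x::finite. prob_vec P}"
  unfolding compact_eq_bounded_closed
proof
  show "bounded {P::real^'x. prob_vec P}"
    unfolding bounded_iff
  proof (intro exI ballI)
    fix P :: "real^'x" assume "P \<in> {P. prob_vec P}"
    then have "(\<Sum>i\<in>UNIV. \<bar>P $ i\<bar>) = 1" by (simp add: prob_vec_def)
    then show "norm P \<le> 1" using norm_le_l1_cart[of P] by simp
  qed
  have "{P::real^'x. prob_vec P} = (\<Inter>x. {P. 0 \<le> P $ x}) \<inter> {P. (\<Sum>x\<in>UNIV. P $ x) = 1}"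
    by (auto simp: prob_vec_def)
  also have "closed \<dots>"
    by (intro closed_Int closed_INT ballI closed_Collect_le closed_Collect_eq continuous_intros)
  finally show "closed {P::real^'x. prob_vec P}" .
qed

lemma convex_prob_vec: "convex {P::real^'x::finite. prob_vec P}"
  unfolding convex_def prob_vec_def
  by (auto simp: sum.distrib sum_distrib_left[symmetric])

lemma prob_vec_mult:
  assumes "transition_matrix W" and "prob_vec P"
  shows "prob_vec (abs_tm W *v P)"
proof -
  have "0 \<le> (abs_tm W *v P) $ i" for i
    using assms abs_tm_nonneg[OF assms(1)]
    by (auto simp: prob_vec_def matrix_vector_mult_def intro!: sum_nonneg)
  moreover have "entry_sum (abs_tm W *v P) = 1"
    using assms by (simp add: entry_sum_mult_vec transition_matrix_def prob_vec_def)
  ultimately show ?thesis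
    by (simp add: prob_vec_def entry_sum_def)
qed

lemma ex_stationary_prob_vec:
  fixes W :: "'y::finite \<Rightarrow> real^'x::finite^'x"
  assumes "transition_matrix W"
  obtains P where "prob_vec P" and "abs_tm W *v P = P"
proof -
  have "prob_vec (axis x 1 :: real^'x)" for x
    by (simp add: prob_vec_def axis_def)
  then have "{P::real^'x. prob_vec P} \<noteq> {}"
    by blast
  moreover have "continuous_on {P. prob_vec P} ((*v) (abs_tm W))"
    by (intro linear_continuous_on matrix_vector_mul_bounded_linear)
  moreover have "(*v) (abs_tm W) \<in> {P. prob_vec P} \<rightarrow> {P. prob_vec P}"
    using prob_vec_mult[OF assms] by blast
  ultimately show thesis
    using brouwer[OF compact_prob_vec convex_prob_vec] that by blast
qed

text \<open>Replacing row x0 of I - |W| by the all-ones row turns stationarity together with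
  normalisation into the square system N P = e_x0; by Cramer's rule the stationary
  distribution is then a vector of polynomials in W divided by det N.\<close>

definition stationary_system :: "'x::finite \<Rightarrow> ('y::finite \<Rightarrow> real^'x^'x) \<Rightarrow> real^'x^'x" where
  "stationary_system x0 W = (\<chi> i j. if i = x0 then 1 else (if i = j then 1 else 0) - abs_tm W $ i $ j)"

definition stationary_numerator :: "'x::finite \<Rightarrow> ('y::finite \<Rightarrow> real^'x^'x) \<Rightarrow> real^'x" where
  "stationary_numerator x0 W =
     (\<chi> k. det (\<chi> i j. if j = k then axis x0 1 $ i else stationary_system x0 W $ i $ j))"

lemma stationary_system_mult:
  assumes "prob_vec P" and "abs_tm W *v P = P"
  shows "stationary_system x0 W *v P = axis x0 1"
proof -
  have "(stationary_system x0 W *v P) $ i = P $ i - (abs_tm W *v P) $ i" if "i \<noteq> x0" for i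
    using that by (simp add: stationary_system_def matrix_vector_mult_def left_diff_distrib
        sum_subtractf if_distrib[of "\<lambda>a. a * _"] cong: if_cong)
  with assms show ?thesis
    by (auto simp: vec_eq_iff axis_def prob_vec_def stationary_system_def matrix_vector_mult_def)
qed

lemma stationary_numerator_eq:
  assumes "det (stationary_system x0 W) \<noteq> 0" and "stationary_system x0 W *v P = axis x0 1"
  shows "stationary_numerator x0 W = det (stationary_system x0 W) *s P"
  using cramer[OF assms(1), of P "axis x0 1"] assms by (simp add: stationary_numerator_def vec_eq_iff)

lemma stationary_eqI:
  assumes "det (stationary_system x0 W) \<noteq> 0" and "prob_vec P" and "abs_tm W *v P = P"
  shows "stationary W = P"
  unfolding stationary_def
proof (rule the_equality)
  fix Q assume "prob_vec Q \<and> abs_tm W *v Q = Q"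
  then have "stationary_system x0 W *v (Q - P) = 0"
    using assms(2,3) by (simp add: stationary_system_mult matrix_vector_mult_diff_distrib)
  then show "Q = P"
    using assms(1) det_nonzero_iff_kernel_trivial by fastforce
qed (use assms(2,3) in simp)

lemma polyfun_observability_det:
  assumes "\<And>y. poly_mat V (\<lambda>s. W s y)"
  shows "(\<lambda>s. observability_det (W s) ws) \<in> polyfun V"
proof -
  have "\<forall>i j. (\<lambda>s. wprod (W s) ys $ i $ j) \<in> polyfun V" for ys
    using poly_mat_wprod[OF assms] by (simp add: poly_mat_def)
  then show ?thesis
    unfolding observability_det_def by (auto simp: poly_mat_def intro!: polyfun_det polyfun_sum)
qed

lemma polyfun_reachability_det:
  assumes "\<And>y. poly_mat V (\<lambda>s. W s y)" and "poly_vec V P"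
  shows "(\<lambda>s. reachability_det (W s) vs (P s)) \<in> polyfun V"
proof -
  have "\<forall>j. (\<lambda>s. (wprod (W s) ys *v P s) $ j) \<in> polyfun V" for ys
    using poly_vec_mult[OF poly_mat_wprod[OF assms(1)] assms(2)] by (simp add: poly_vec_def)
  then show ?thesis
    unfolding reachability_det_def by (auto simp: poly_mat_def intro!: polyfun_det)
qed

lemma poly_mat_stationary_system:
  fixes W :: "'s \<Rightarrow> 'y::finite \<Rightarrow> real^'x::finite^'x"
  shows "(\<And>y. poly_mat V (\<lambda>s. W s y)) \<Longrightarrow> poly_mat V (\<lambda>s. stationary_system x0 (W s))"
  using poly_mat_abs_tm[of V W] unfolding poly_mat_def stationary_system_def
  by (auto intro!: polyfun_If polyfun_diff polyfun_const)

lemma poly_vec_stationary_numerator: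
  fixes W :: "'s \<Rightarrow> 'y::finite \<Rightarrow> real^'x::finite^'x"
  shows "(\<And>y. poly_mat V (\<lambda>s. W s y)) \<Longrightarrow> poly_vec V (\<lambda>s. stationary_numerator x0 (W s))"
  using poly_mat_stationary_system[of V W x0] unfolding poly_vec_def stationary_numerator_def
  by (auto simp: poly_mat_def intro!: polyfun_det polyfun_If polyfun_const)

section \<open>A Vandermonde witness\<close>

lemma weighted_power_sums_eq_0_imp:
  fixes lam :: "'x::finite \<Rightarrow> real"
  assumes "inj lam" and "\<And>k. k < CARD('x) \<Longrightarrow> (\<Sum>x\<in>UNIV. c x * lam x ^ k) = 0"
  shows "c x1 = 0"
proof -
  \<comment> \<open>Pair the vanishing power sums with the polynomial that vanishes at every lam x except lam x1.\<close>
  define p where "p = (\<Prod>z\<in>UNIV - {x1}. [:- lam z, 1:])"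
  have "degree p \<le> CARD('x) - 1"
    using degree_prod_sum_le[of "UNIV - {x1}" "\<lambda>z. [:- lam z, 1:]"] by (simp add: p_def card_Diff_singleton)
  then have deg: "degree p < CARD('x)"
    using zero_less_card_finite[where 'a='x] by linarith
  have roots: "poly p (lam x) = 0" if "x \<noteq> x1" for x
    unfolding p_def poly_prod using that by (intro prod_zero) auto
  have "0 = (\<Sum>i\<le>degree p. coeff p i * (\<Sum>x\<in>UNIV. c x * lam x ^ i))"
    using assms(2) deg by (auto intro!: sum.neutral[symmetric])
  also have "\<dots> = (\<Sum>x\<in>UNIV. c x * poly p (lam x))"
    by (simp add: poly_altdef sum_distrib_left mult.left_commute) (rule sum.swap)
  also have "\<dots> = c x1 * poly p (lam x1)"
    using roots by (subst sum.remove[of _ x1]) (auto intro!: sum.neutral)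
  finally show ?thesis
    using assms(1) by (auto simp: p_def poly_prod inj_def)
qed

lemma vandermonde_det_nonzero:
  fixes lam \<mu> :: "'x::finite \<Rightarrow> real"
  assumes "inj lam" and "bij_betw e UNIV {0..<CARD('x)}" and "\<And>x. \<mu> x \<noteq> 0"
  shows "det (\<chi> i x. \<mu> x * lam x ^ e i) \<noteq> 0"
  unfolding det_nonzero_iff_kernel_trivial
proof (intro allI impI)
  fix c :: "real^'x" assume c: "(\<chi> i x. \<mu> x * lam x ^ e i) *v c = 0"
  have "(\<Sum>x\<in>UNIV. (c $ x * \<mu> x) * lam x ^ k) = 0" if "k < CARD('x)" for k
  proof -
    have "k \<in> e ` UNIV"
      using assms(2) that by (simp add: bij_betw_def)
    then obtain i where "e i = k" by blast
    then show ?thesis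
      using c[unfolded vec_eq_iff, rule_format, of i] by (simp add: matrix_vector_mult_def mult_ac)
  qed
  then have "c $ x * \<mu> x = 0" for x
    by (rule weighted_power_sums_eq_0_imp[OF assms(1), where c="\<lambda>x. c $ x * \<mu> x"])
  then show "c = 0"
    using assms(3) by (simp add: vec_eq_iff)
qed

definition diag_mat :: "('x::finite \<Rightarrow> real) \<Rightarrow> real^'x^'x" where
  "diag_mat a = (\<chi> i j. if i = j then a i else 0)"

lemma diag_mat_mult: "diag_mat a ** diag_mat b = diag_mat (\<lambda>x. a x * b x)"
  unfolding diag_mat_def matrix_matrix_mult_def
  by (auto simp: vec_eq_iff if_distrib[of "\<lambda>x. x * _"] cong: if_cong)

lemma diag_mat_one: "diag_mat (\<lambda>_. 1) = mat 1"
  unfolding diag_mat_def mat_def by (simp add: vec_eq_iff)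

text \<open>Any point of the chart can witness that a polynomial is not identically zero, so the
  witness need not be nonnegative. With W_y1 = diag lam and |W| = J/n, the words y1^k act as
  diagonal powers and all certificates become Vandermonde determinants.\<close>

definition witness_tm :: "'y \<Rightarrow> 'y \<Rightarrow> ('x::finite \<Rightarrow> real) \<Rightarrow> 'y \<Rightarrow> real^'x^'x" where
  "witness_tm y0 y1 lam = (\<lambda>y. if y = y1 then diag_mat lam
      else if y = y0 then (\<chi> i j. 1 / real CARD('x)) - diag_mat lam else 0)"

lemma abs_tm_witness_tm:
  fixes y0 y1 :: "'y::finite" and lam :: "'x::finite \<Rightarrow> real"
  assumes "y1 \<noteq> y0"
  shows "abs_tm (witness_tm y0 y1 lam) = (\<chi> i j. 1 / real CARD('x))"
proof -
  have "witness_tm y0 y1 lam = (\<lambda>y. (if y = y1 then diag_mat lam else 0)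
      + (if y = y0 then (\<chi> i j. 1 / real CARD('x)) - diag_mat lam else 0))"
    using assms by (auto simp: witness_tm_def fun_eq_iff)
  then show ?thesis
    unfolding abs_tm_def by (simp add: sum.distrib)
qed

lemma wprod_witness_tm_replicate: "wprod (witness_tm y0 y1 lam) (replicate k y1) = diag_mat (\<lambda>x. lam x ^ k)"
  by (induction k) (auto simp: witness_tm_def diag_mat_mult diag_mat_one mult.commute)

lemma diag_mat_mult_const: "diag_mat a *v (\<chi> _. c) = (\<chi> x. c * a x)"
  unfolding diag_mat_def matrix_vector_mult_def
  by (simp add: vec_eq_iff if_distrib[of "\<lambda>x. x * _"] cong: if_cong)

lemma observability_det_witness_tm:
  fixes lam :: "'x::finite \<Rightarrow> real"
  assumes "inj lam" and "bij_betw e UNIV {0..<CARD('x)}" and "\<And>x. lam x \<noteq> 0"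
  shows "observability_det (witness_tm y0 y1 lam) (\<lambda>i. replicate (Suc (e i)) y1) \<noteq> 0"
  using vandermonde_det_nonzero[OF assms(1,2), of lam] assms(3)
  unfolding observability_det_def wprod_witness_tm_replicate
  by (simp add: diag_mat_def if_distrib cong: if_cong)

lemma reachability_det_witness_tm:
  fixes lam :: "'x::finite \<Rightarrow> real"
  assumes "inj lam" and "bij_betw e UNIV {0..<CARD('x)}" and "c \<noteq> 0"
  shows "reachability_det (witness_tm y0 y1 lam) (\<lambda>i. replicate (e i) y1) (\<chi> _. c) \<noteq> 0"
  using vandermonde_det_nonzero[OF assms(1,2), of "\<lambda>_. c"] assms(3)
  by (simp add: reachability_det_def wprod_witness_tm_replicate diag_mat_mult_const)

lemma stationary_system_mult_uniform:
  fixes W :: "'y::finite \<Rightarrow> real^'x::finite^'x"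
  assumes "abs_tm W = (\<chi> i j. 1 / real CARD('x))"
  shows "stationary_system x0 W *v (\<chi> _. 1 / real CARD('x)) = axis x0 1"
  by (rule stationary_system_mult) (simp_all add: prob_vec_def assms vec_eq_iff matrix_vector_mult_def)

lemma det_stationary_system_uniform:
  fixes W :: "'y::finite \<Rightarrow> real^'x::finite^'x"
  assumes "abs_tm W = (\<chi> i j. 1 / real CARD('x))"
  shows "det (stationary_system x0 W) \<noteq> 0"
  unfolding det_nonzero_iff_kernel_trivial
proof (intro allI impI)
  fix c :: "real^'x" assume c: "stationary_system x0 W *v c = 0"
  let ?s = "\<Sum>j\<in>UNIV. c $ j"
  have "(stationary_system x0 W *v c) $ i = (if i = x0 then ?s else c $ i - ?s / real CARD('x))" for i
    by (simp add: stationary_system_def assms matrix_vector_mult_def left_diff_distrib sum_subtractf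
        sum_divide_distrib if_distrib[of "\<lambda>a. a * _"] cong: if_cong)
  then have s: "?s = 0"
    using c by (metis zero_index)
  then have others: "c $ i = 0" if "i \<noteq> x0" for i
    using c that \<open>\<And>i. (stationary_system x0 W *v c) $ i = _\<close> by (metis diff_zero div_0 zero_index)
  have "?s = c $ x0 + (\<Sum>j\<in>UNIV - {x0}. c $ j)"
    by (simp add: sum.remove[of UNIV x0])
  with s others have "c $ x0 = 0"
    by simp
  with others show "c = 0"
    by (metis vec_eq_iff zero_index)
qed

lemma reachability_det_witness_tm_stationary_numerator:
  fixes y0 y1 :: "'y::finite" and lam :: "'x::finite \<Rightarrow> real"
  assumes "y1 \<noteq> y0" and "inj lam" and "bij_betw e UNIV {0..<CARD('x)}"
  shows "reachability_det (witness_tm y0 y1 lam) (\<lambda>i. replicate (e i) y1)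
    (stationary_numerator x0 (witness_tm y0 y1 lam)) \<noteq> 0"
proof -
  note uniform = abs_tm_witness_tm[OF assms(1)]
  have N: "det (stationary_system x0 (witness_tm y0 y1 lam)) \<noteq> 0"
    by (rule det_stationary_system_uniform[OF uniform])
  then have "stationary_numerator x0 (witness_tm y0 y1 lam)
      = (\<chi> _. det (stationary_system x0 (witness_tm y0 y1 lam)) / real CARD('x))"
    using stationary_numerator_eq[OF N stationary_system_mult_uniform[OF uniform]] by (simp add: vec_eq_iff)
  with N show ?thesis
    using reachability_det_witness_tm[OF assms(2,3), of "det (stationary_system x0 (witness_tm y0 y1 lam)) / real CARD('x)"]
    by simp
qed

lemma reachability_det_scale:
  fixes W :: "'y \<Rightarrow> real^'x::finite^'x"
  shows "reachability_det W vs (c *s P) = c ^ CARD('x) * reachability_det W vs P"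
  using det_rows_mul[of "\<lambda>_. c" "\<lambda>i. wprod W (vs i) *v P"]
  by (simp add: reachability_det_def vector_scalar_commute)

lemma reachability_det_stationary_numerator:
  fixes W :: "'y::finite \<Rightarrow> real^'x::finite^'x"
  assumes "transition_matrix W" and "det (stationary_system x0 W) \<noteq> 0"
  shows "reachability_det W vs (stationary_numerator x0 W)
    = det (stationary_system x0 W) ^ CARD('x) * reachability_det W vs (stationary W)"
proof -
  obtain P where P: "prob_vec P" "abs_tm W *v P = P"
    using ex_stationary_prob_vec[OF assms(1)] .
  then have "stationary_numerator x0 W = det (stationary_system x0 W) *s P"
    by (intro stationary_numerator_eq[OF assms(2)] stationary_system_mult)
  moreover have "stationary W = P"
    by (rule stationary_eqI[OF assms(2) P])
  ultimately show ?thesis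
    by (simp add: reachability_det_scale)
qed

section \<open>Genericity\<close>

lemma KW_eq_0_Vk_eq_UNIV_if_dets_nonzero:
  fixes W :: "'y::finite \<Rightarrow> real^'x::finite^'x"
  assumes "column_stochastic (abs_tm W)"
    and "observability_det W ws \<noteq> 0" and "\<And>i. length (ws i) \<le> CARD('x)"
    and "reachability_det W vs P \<noteq> 0" and "\<And>i. length (vs i) \<le> CARD('x)"
  shows "KW W = {0} \<and> Vk W P (kPW P W) = UNIV"
  using KW_eq_0_if_observability_det_nonzero[OF assms(1-3)]
    Vk_kPW_eq_UNIV_if_reachability_det_nonzero[OF assms(4,5)]
  by (simp add: Suc_leI)

lemma ex_enumeration:
  obtains e :: "'x::finite \<Rightarrow> nat"
  where "bij_betw e UNIV {0..<CARD('x)}" and "inj (\<lambda>x. real (Suc (e x)))" and "\<And>x. e x < CARD('x)"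
proof -
  obtain e :: "'x \<Rightarrow> nat" where e: "bij_betw e UNIV {0..<CARD('x)}"
    using ex_bij_betw_finite_nat[of "UNIV :: 'x set"] by auto
  then show thesis
    by (intro that) (auto simp: inj_def bij_betw_def)
qed

lemma tm_of_tm_point_witness_tm:
  fixes y0 y1 :: "'y::finite" and lam :: "'x::finite \<Rightarrow> real"
  assumes "y1 \<noteq> y0"
  shows "tm_of y0 x0 (tm_point (witness_tm y0 y1 lam)) = witness_tm y0 y1 lam"
  by (rule tm_of_tm_point) (simp add: abs_tm_witness_tm[OF assms] column_stochastic_def)

lemma finite_tm_coords: "finite (tm_coords (y0::'y::finite) (x0::'x::finite))"
  by (rule finite_subset[OF subset_UNIV]) simp

lemma AE_irreducible_observable_stationary_reachable:
  fixes y0 y1 :: "'y::finite" and x0 :: "'x::finite"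
  assumes "y1 \<noteq> y0"
  shows "AE \<theta> in PiM (tm_coords y0 x0) (\<lambda>_. lborel). transition_matrix (tm_of y0 x0 \<theta>) \<longrightarrow>
    irreducible_tm (tm_of y0 x0 \<theta>) \<and> KW (tm_of y0 x0 \<theta>) = {0} \<and>
    Vk (tm_of y0 x0 \<theta>) (stationary (tm_of y0 x0 \<theta>)) (kPW (stationary (tm_of y0 x0 \<theta>)) (tm_of y0 x0 \<theta>)) = UNIV"
proof -
  obtain e :: "'x \<Rightarrow> nat" where e: "bij_betw e UNIV {0..<CARD('x)}"
    and lam: "inj (\<lambda>x. real (Suc (e x)))" and len: "\<And>x. e x < CARD('x)"
    using ex_enumeration[where 'x='x] by blast
  let ?T = "tm_of y0 x0" and ?W = "witness_tm y0 y1 (\<lambda>x. real (Suc (e x)))"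
  let ?ws = "\<lambda>i. replicate (Suc (e i)) y1" and ?vs = "\<lambda>i. replicate (e i) y1"
  have T: "\<And>y. poly_mat (coordinates (tm_coords y0 x0)) (\<lambda>\<theta>. ?T \<theta> y)"
    by (rule poly_mat_tm_of) (auto intro: polyfun_var)
  note W = tm_of_tm_point_witness_tm[OF assms] and W_abs = abs_tm_witness_tm[OF assms]
  have "AE \<theta> in PiM (tm_coords y0 x0) (\<lambda>_. lborel). observability_det (?T \<theta>) ?ws \<noteq> 0"
    by (rule AE_polyfun_nonzero[OF finite_tm_coords polyfun_observability_det[OF T], where a="tm_point ?W"])
      (simp only: W, rule observability_det_witness_tm[OF lam e], simp)
  moreover have "AE \<theta> in PiM (tm_coords y0 x0) (\<lambda>_. lborel). det (stationary_system x0 (?T \<theta>)) \<noteq> 0"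
    by (rule AE_polyfun_nonzero[OF finite_tm_coords polyfun_det[OF poly_mat_stationary_system[OF T]], where a="tm_point ?W"])
      (simp only: W, rule det_stationary_system_uniform[OF W_abs])
  moreover have "AE \<theta> in PiM (tm_coords y0 x0) (\<lambda>_. lborel).
      reachability_det (?T \<theta>) ?vs (stationary_numerator x0 (?T \<theta>)) \<noteq> 0"
    by (rule AE_polyfun_nonzero[OF finite_tm_coords
          polyfun_reachability_det[OF T poly_vec_stationary_numerator[OF T]], where a="tm_point ?W"])
      (simp only: W, rule reachability_det_witness_tm_stationary_numerator[OF assms lam e])
  moreover have "AE \<theta> in PiM (tm_coords y0 x0) (\<lambda>_. lborel). (\<Prod>i\<in>UNIV. \<Prod>j\<in>UNIV. abs_tm (?T \<theta>) $ i $ j) \<noteq> 0"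
    using poly_mat_abs_tm[of _ ?T, OF T]
    by (intro AE_polyfun_nonzero[OF finite_tm_coords, where a="tm_point ?W"])
      (auto simp: W W_abs poly_mat_def intro!: polyfun_prod)
  ultimately show ?thesis
  proof eventually_elim
    case (elim \<theta>)
    show ?case
    proof
      assume tm: "transition_matrix (?T \<theta>)"
      have "reachability_det (?T \<theta>) ?vs (stationary (?T \<theta>)) \<noteq> 0"
        using elim(2,3) reachability_det_stationary_numerator[OF tm elim(2)] by simp
      then show "irreducible_tm (?T \<theta>) \<and> KW (?T \<theta>) = {0} \<and>
          Vk (?T \<theta>) (stationary (?T \<theta>)) (kPW (stationary (?T \<theta>)) (?T \<theta>)) = UNIV"
        by (intro conjI[OF irreducible_tm_if_abs_tm_nonzero[OF tm]]
            KW_eq_0_Vk_eq_UNIV_if_dets_nonzero[OF column_stochastic_tm_of elim(1)])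
          (use elim(4) len in \<open>auto simp: Suc_leI less_imp_le\<close>)
    qed
  qed
qed

lemma AE_observable_reachable:
  fixes y0 y1 :: "'y::finite" and x0 :: "'x::finite"
  assumes "y1 \<noteq> y0"
  shows "AE z in PiM (tm_coords y0 x0) (\<lambda>_. lborel) \<Otimes>\<^sub>M PiM (UNIV - {x0}) (\<lambda>_. lborel).
    KW (tm_of y0 x0 (fst z)) = {0} \<and>
    Vk (tm_of y0 x0 (fst z)) (dist_of x0 (snd z)) (kPW (dist_of x0 (snd z)) (tm_of y0 x0 (fst z))) = UNIV"
proof -
  obtain e :: "'x \<Rightarrow> nat" where e: "bij_betw e UNIV {0..<CARD('x)}"
    and lam: "inj (\<lambda>x. real (Suc (e x)))" and len: "\<And>x. e x < CARD('x)"
    using ex_enumeration[where 'x='x] by blast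
  let ?T = "\<lambda>z. tm_of y0 x0 (fst z)" and ?P = "\<lambda>z. dist_of x0 (snd z)"
  let ?W = "witness_tm y0 y1 (\<lambda>x. real (Suc (e x)))" and ?u = "\<lambda>_. 1 / real CARD('x)"
  let ?ws = "\<lambda>i. replicate (Suc (e i)) y1" and ?vs = "\<lambda>i. replicate (e i) y1"
  let ?V = "(\<lambda>j z. fst z j) ` tm_coords y0 x0 \<union> (\<lambda>j z. snd z j) ` (UNIV - {x0})"
  have T: "\<And>y. poly_mat ?V (\<lambda>z. ?T z y)"
    by (rule poly_mat_tm_of) (auto intro: polyfun_var)
  have P: "poly_vec ?V ?P"
    by (rule poly_vec_dist_of) (auto intro: polyfun_var)
  have uniform: "dist_of x0 ?u = (\<chi> _. 1 / real CARD('x))"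
    by (simp add: dist_of_def vec_eq_iff card_Diff_singleton of_nat_diff field_simps)
  have "AE z in PiM (tm_coords y0 x0) (\<lambda>_. lborel) \<Otimes>\<^sub>M PiM (UNIV - {x0}) (\<lambda>_. lborel).
      observability_det (?T z) ?ws * reachability_det (?T z) ?vs (?P z) \<noteq> 0"
    using observability_det_witness_tm[OF lam e, of y0 y1]
      reachability_det_witness_tm[OF lam e, of "1 / real CARD('x)" y0 y1]
    by (intro AE_pair_polyfun_nonzero[where a="(tm_point ?W, ?u)"]
        polyfun_mult polyfun_observability_det polyfun_reachability_det T P)
      (simp_all add: finite_tm_coords tm_of_tm_point_witness_tm[OF assms] uniform del: replicate.simps)
  then show ?thesis
    by eventually_elim
      (rule KW_eq_0_Vk_eq_UNIV_if_dets_nonzero[OF column_stochastic_tm_of], auto simp: Suc_leI less_imp_le len)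
qed

theorem lemma5:
  fixes y0 :: "'y::finite" and x0 :: "'x::finite"
  assumes "CARD('y) \<ge> 2"
  shows "(AE z in (PiM (tm_coords y0 x0) (\<lambda>_. lborel)) \<Otimes>\<^sub>M (PiM (UNIV - {x0}) (\<lambda>_. lborel)).
            transition_matrix (tm_of y0 x0 (fst z)) \<and> prob_vec (dist_of x0 (snd z)) \<longrightarrow>
              KW (tm_of y0 x0 (fst z)) = {0} \<and>
              Vk (tm_of y0 x0 (fst z)) (dist_of x0 (snd z))
                 (kPW (dist_of x0 (snd z)) (tm_of y0 x0 (fst z))) = UNIV)
       \<and> (AE \<theta> in PiM (tm_coords y0 x0) (\<lambda>_. lborel).
            transition_matrix (tm_of y0 x0 \<theta>) \<longrightarrow>
              irreducible_tm (tm_of y0 x0 \<theta>) \<and>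
              KW (tm_of y0 x0 \<theta>) = {0} \<and>
              Vk (tm_of y0 x0 \<theta>) (stationary (tm_of y0 x0 \<theta>))
                 (kPW (stationary (tm_of y0 x0 \<theta>)) (tm_of y0 x0 \<theta>)) = UNIV)"
proof -
  have "\<exists>a b :: 'y. a \<noteq> b"
    using assms card_le_Suc0_iff_eq[of "UNIV :: 'y set"] by auto
  then obtain y1 :: 'y where y1: "y1 \<noteq> y0"
    by metis
  show ?thesis
    by (rule conjI[OF AE_mp[OF AE_observable_reachable[OF y1, of x0]]
          AE_irreducible_observable_stationary_reachable[OF y1]])
      (rule AE_I2, blast)
qed

end
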